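(* For every real $p>1$ and all integers $s\ge2$ and $n\ge s$, $$\sum_{\mathbf a\in\mathcal{F}_s(n)}\Big(\frac{n}{\prod_{j=1}^sa_j}\Big)^p<C_p^{s-1},$$ where $\mathcal{F}_s(n)=\{\mathbf a\in\{1,\dots,n\}^s:\sum_{j=1}^sa_j=n\}$ and $C_p=2^p\zeta(p)$ with $\zeta(p)=\sum_{a=1}^\infty a^{-p}$. *)

theory Defs
  imports "HOL-Analysis.Analysis"
begin

definition F_set :: "nat \<Rightarrow> nat \<Rightarrow> (nat \<Rightarrow> nat) set" where
  "F_set s n = {a \<in> ({1..s} \<rightarrow>\<^sub>E {1..n}). (\<Sum>j=1..s. a j) = n}"

definition zeta_real :: "real \<Rightarrow> real" where
  "zeta_real p = (\<Sum>a. 1 / (real (Suc a)) powr p)"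

definition C_const :: "real \<Rightarrow> real" where
  "C_const p = 2 powr p * zeta_real p"

end

theory Submission
  imports Defs
begin

(* Splitting off the last part b of a composition of n gives the recursion
     F_sum p (s+1) n = sum_{b=1}^{n-1} (n / ((n-b) b))^p * F_sum p s (n-b).
   Since n / ((n-b) b) = 1/b + 1/(n-b), convexity of t^p bounds the weights by
   2^(p-1) (b^-p + (n-b)^-p), so they sum to at most 2^p sum_{b<n} b^-p < C_p.
   Induction on s, starting from F_sum p 1 n <= 1, then gives the bound for every n. *)

definition F_sum :: "real \<Rightarrow> nat \<Rightarrow> nat \<Rightarrow> real" where
  "F_sum p s n = (\<Sum>a\<in>F_set s n. (real n / real (\<Prod>j=1..s. a j)) powr p)"

lemma finite_F_set: "finite (F_set s n)"
  by (rule finite_subset[of _ "{1..s} \<rightarrow>\<^sub>E {1..n}"]) (auto simp: F_set_def finite_PiE)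

lemma F_set_one: "F_set 1 n = (if n = 0 then {} else {\<lambda>j\<in>{1}. n})"
  by (auto simp: F_set_def PiE_def extensional_def fun_eq_iff)

lemma F_sum_one_le: "F_sum p 1 n \<le> 1"
  unfolding F_sum_def F_set_one by simp

lemma sum_fun_upd_Suc_last:
  fixes f :: "nat \<Rightarrow> 'a::comm_monoid_add"
  shows "(\<Sum>j=1..Suc s. (f(Suc s := x)) j) = (\<Sum>j=1..s. f j) + x"
  by (simp add: sum.nat_ivl_Suc')

lemma bij_betw_F_set_Suc:
  assumes "s \<ge> 1"
  shows "bij_betw (\<lambda>(b, a). a(Suc s := b))
           (SIGMA b:{1..n-1}. F_set s (n - b)) (F_set (Suc s) n)"
proof (rule bij_betw_byWitness[where f' = "\<lambda>a. (a (Suc s), a(Suc s := undefined))"])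
  show "\<forall>x\<in>(SIGMA b:{1..n-1}. F_set s (n - b)).
          (\<lambda>a. (a (Suc s), a(Suc s := undefined))) ((\<lambda>(b, a). a(Suc s := b)) x) = x"
    by (auto simp: F_set_def PiE_def extensional_def fun_eq_iff)
  show "\<forall>a\<in>F_set (Suc s) n. (\<lambda>(b, a). a(Suc s := b)) (a (Suc s), a(Suc s := undefined)) = a"
    by auto
  show "(\<lambda>(b, a). a(Suc s := b)) ` (SIGMA b:{1..n-1}. F_set s (n - b)) \<subseteq> F_set (Suc s) n"
  proof clarify
    fix b a assume b: "b \<in> {1..n-1}" and a: "a \<in> F_set s (n - b)"
    have "(\<Sum>j=1..Suc s. (a(Suc s := b)) j) = n"
      using a b by (auto simp: sum_fun_upd_Suc_last F_set_def)
    with a b show "a(Suc s := b) \<in> F_set (Suc s) n"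
      by (auto simp: F_set_def PiE_def extensional_def Pi_def)
  qed
  show "(\<lambda>a. (a (Suc s), a(Suc s := undefined))) ` F_set (Suc s) n
          \<subseteq> (SIGMA b:{1..n-1}. F_set s (n - b))"
  proof (rule image_subsetI)
    fix a assume a: "a \<in> F_set (Suc s) n"
    then have range: "a j \<in> {1..n}" if "j \<in> {1..Suc s}" for j
      using that by (auto simp: F_set_def)
    have parts: "(\<Sum>j=1..s. a j) + a (Suc s) = n"
      using a sum_fun_upd_Suc_last[where f = a and x = "a (Suc s)"] by (simp add: F_set_def)
    have "a 1 \<le> (\<Sum>j=1..s. a j)"
      using assms by (intro member_le_sum) auto
    moreover have "a 1 \<ge> 1" "a (Suc s) \<ge> 1"
      using range assms by auto
    ultimately have "a (Suc s) \<in> {1..n-1}"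
      using parts by auto
    moreover have "a(Suc s := undefined) \<in> F_set s (n - a (Suc s))"
    proof -
      have "a j \<le> (\<Sum>j=1..s. a j)" if "j \<in> {1..s}" for j
        using that by (intro member_le_sum) auto
      then show ?thesis
        using range parts a by (auto simp: F_set_def PiE_def extensional_def Pi_def)
    qed
    ultimately show "(a (Suc s), a(Suc s := undefined)) \<in> (SIGMA b:{1..n-1}. F_set s (n - b))"
      by simp
  qed
qed

lemma F_sum_Suc:
  assumes "s \<ge> 1"
  shows "F_sum p (Suc s) n
           = (\<Sum>b=1..n-1. (real n / (real (n - b) * real b)) powr p * F_sum p s (n - b))"
proof -
  have factor: "(real n / real (\<Prod>j=1..Suc s. (a(Suc s := b)) j)) powr p
      = (real n / (real (n - b) * real b)) powr p * (real (n - b) / real (\<Prod>j=1..s. a j)) powr p"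
    if b: "b \<in> {1..n-1}" and a: "a \<in> F_set s (n - b)" for a b
  proof -
    have "(\<Prod>j=1..s. a j) > 0"
      using a by (auto simp: F_set_def PiE_def Pi_def intro!: prod_pos)
    moreover have "(\<Prod>j=1..Suc s. (a(Suc s := b)) j) = (\<Prod>j=1..s. a j) * b"
      by (simp add: prod.nat_ivl_Suc')
    moreover have "n - b > 0"
      using b by auto
    ultimately have "real n / real (\<Prod>j=1..Suc s. (a(Suc s := b)) j)
        = real n / (real (n - b) * real b) * (real (n - b) / real (\<Prod>j=1..s. a j))"
      by (simp add: field_simps del: of_nat_diff of_nat_prod)
    then show ?thesis
      by (simp only:) (rule powr_mult; simp)
  qed
  have "F_sum p (Suc s) n = (\<Sum>(b, a)\<in>(SIGMA b:{1..n-1}. F_set s (n - b)).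
          (real n / real (\<Prod>j=1..Suc s. (a(Suc s := b)) j)) powr p)"
    unfolding F_sum_def by (subst sum.reindex_bij_betw[OF bij_betw_F_set_Suc[OF assms], symmetric])
      (simp add: case_prod_beta)
  also have "\<dots> = (\<Sum>(b, a)\<in>(SIGMA b:{1..n-1}. F_set s (n - b)).
          (real n / (real (n - b) * real b)) powr p * (real (n - b) / real (\<Prod>j=1..s. a j)) powr p)"
    by (rule sum.cong[OF refl]) (clarify, rule factor, auto)
  also have "\<dots> = (\<Sum>b=1..n-1. (real n / (real (n - b) * real b)) powr p * F_sum p s (n - b))"
    by (simp add: sum.Sigma[symmetric] finite_F_set F_sum_def sum_distrib_left)
  finally show ?thesis .
qed

lemma summable_zeta_real:
  assumes "p > 1"
  shows "summable (\<lambda>a. 1 / real (Suc a) powr p)"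
proof -
  have "summable (\<lambda>a. real a powr (-p))"
    using assms summable_real_powr_iff[of "-p"] by simp
  then have "summable (\<lambda>a. real (Suc a) powr (-p))"
    by (rule summable_Suc_iff[THEN iffD2])
  then show ?thesis
    by (simp add: powr_minus_divide)
qed

lemma sum_inverse_powr_less_zeta_real:
  assumes "p > 1"
  shows "(\<Sum>b=1..m. 1 / real b powr p) < zeta_real p"
proof -
  have "(\<Sum>b=1..m. 1 / real b powr p) = (\<Sum>a<m. 1 / real (Suc a) powr p)"
    by (simp add: sum.atLeast1_atMost_eq del: of_nat_Suc)
  also have "\<dots> < zeta_real p"
    unfolding zeta_real_def by (rule sum_less_suminf[OF summable_zeta_real[OF assms]]) simp
  finally show ?thesis .
qed

lemma C_const_pos:
  assumes "p > 1"
  shows "C_const p > 0"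
  using sum_inverse_powr_less_zeta_real[OF assms, of 0] by (simp add: C_const_def)

lemma powr_add_le:
  fixes p x y :: real
  assumes "p \<ge> 1" "x > 0" "y > 0"
  shows "(x + y) powr p \<le> 2 powr (p - 1) * (x powr p + y powr p)"
proof -
  have "((x + y) / 2) powr p \<le> (x powr p + y powr p) / 2"
    using convex_onD[OF powr_convex[OF assms(1)], of "1/2" x y] assms
    by (simp add: add_divide_distrib)
  then show ?thesis
    using assms by (simp add: powr_divide powr_diff field_simps)
qed

lemma sum_two_parts_less_C_const:
  assumes "p > 1"
  shows "(\<Sum>b=1..n-1. (real n / (real (n - b) * real b)) powr p) < C_const p"
proof -
  have "(\<Sum>b=1..n-1. (real n / (real (n - b) * real b)) powr p)
      \<le> (\<Sum>b=1..n-1. 2 powr (p - 1) * (1 / real b powr p + 1 / real (n - b) powr p))"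
  proof (rule sum_mono)
    fix b assume b: "b \<in> {1..n-1}"
    then have "real n / (real (n - b) * real b) = 1 / real b + 1 / real (n - b)"
      by (auto simp: field_simps)
    then show "(real n / (real (n - b) * real b)) powr p
        \<le> 2 powr (p - 1) * (1 / real b powr p + 1 / real (n - b) powr p)"
      using powr_add_le[of p "1 / real b" "1 / real (n - b)"] assms b by (auto simp: powr_divide)
  qed
  also have "\<dots> = 2 powr (p - 1)
      * ((\<Sum>b=1..n-1. 1 / real b powr p) + (\<Sum>b=1..n-1. 1 / real (n - b) powr p))"
    by (simp add: sum.distrib flip: sum_distrib_left)
  also have "(\<Sum>b=1..n-1. 1 / real (n - b) powr p) = (\<Sum>b=1..n-1. 1 / real b powr p)"
    by (rule sum.reindex_bij_witness[where i = "\<lambda>b. n - b" and j = "\<lambda>b. n - b"]) auto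
  also have "2 powr (p - 1) * ((\<Sum>b=1..n-1. 1 / real b powr p) + (\<Sum>b=1..n-1. 1 / real b powr p))
      = 2 powr p * (\<Sum>b=1..n-1. 1 / real b powr p)"
    by (simp add: powr_diff)
  also have "\<dots> < 2 powr p * zeta_real p"
    using sum_inverse_powr_less_zeta_real[OF assms] by simp
  finally show ?thesis
    by (simp add: C_const_def)
qed

lemma F_sum_Suc_less:
  assumes "p > 1" "s \<ge> 1" "\<And>m. F_sum p s m \<le> C_const p ^ (s - 1)"
  shows "F_sum p (Suc s) n < C_const p ^ s"
proof -
  let ?w = "\<lambda>b. (real n / (real (n - b) * real b)) powr p"
  have "F_sum p (Suc s) n = (\<Sum>b=1..n-1. ?w b * F_sum p s (n - b))"
    by (rule F_sum_Suc[OF assms(2)])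
  also have "\<dots> \<le> (\<Sum>b=1..n-1. ?w b) * C_const p ^ (s - 1)"
    unfolding sum_distrib_right by (intro sum_mono mult_left_mono assms(3)) auto
  also have "\<dots> < C_const p * C_const p ^ (s - 1)"
    using sum_two_parts_less_C_const[OF assms(1)] C_const_pos[OF assms(1)]
    by (intro mult_strict_right_mono) auto
  also have "\<dots> = C_const p ^ s"
    using assms(2) by (simp add: power_eq_if)
  finally show ?thesis .
qed

lemma F_sum_le:
  assumes "p > 1" "s \<ge> 1"
  shows "F_sum p s n \<le> C_const p ^ (s - 1)"
  using assms(2)
proof (induction s arbitrary: n rule: dec_induct)
  case base
  show ?case using F_sum_one_le by simp
next
  case (step s)
  show ?case using less_imp_le[OF F_sum_Suc_less[OF assms(1) step.hyps(1) step.IH]] by simp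
qed

theorem lemmaS10:
  fixes p :: real and s n :: nat
  assumes "p > 1" and "s \<ge> 2" and "n \<ge> s"
  shows "(\<Sum>a\<in>F_set s n. (real n / real (\<Prod>j=1..s. a j)) powr p)
           < C_const p ^ (s - 1)"
proof -
  obtain k where "s = Suc k" "k \<ge> 1"
    using assms(2) by (cases s) auto
  then show ?thesis
    using F_sum_Suc_less[OF assms(1) \<open>k \<ge> 1\<close> F_sum_le[OF assms(1) \<open>k \<ge> 1\<close>]]
    by (simp add: F_sum_def)
qed

end
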